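(* Let $m,t\in\mathbb N$ and $\theta\in\{0,1\}^m$. Let $\rho_{XYR}$ be a density matrix on registers $X,Y$ ($m$ qubits each) and $R$ such that $(\Pi_t^{\mathsf{EPR}}\otimes\mathds 1_R)\rho_{XYR}=\rho_{XYR}$. Let $\{\Pi_{v'}\}_{v'\in\{0,1\}^m}$ be any complete set of orthogonal projectors on $R$. Then $$\sum_{v\in\{0,1\}^m}\mathrm{Tr}\big[(H^\theta|v\rangle\langle v|_XH^\theta\otimes\mathds 1_Y\otimes\Pi_v)\rho_{XYR}\big]\le2^{-m}(m+1)^{2t},$$ i.e. when $X$ is measured in the $H^\theta$ basis (outcome $v$) and $R$ with $\{\Pi_{v'}\}$ (outcome $v'$), $\Pr[v'=v]\le2^{-m}(m+1)^{2t}$; equivalently $\mathbf H_{\min}(V\mid R)\ge m-2t\log_2(m+1)$.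
   Context: $H^\theta=H^{\theta_1}\otimes\cdots\otimes H^{\theta_m}$ with $H$ the Hadamard gate. For $a,b\in\{0,1\}^m$, $|\phi^+_{ab}\rangle=2^{-m/2}\sum_{v\in\{0,1\}^m}|v\rangle_X\otimes X^aZ^b|v\rangle_Y$ (Pauli $X^a=\bigotimes_iX^{a_i}$, $Z^b=\bigotimes_iZ^{b_i}$). $\Pi_t^{\mathsf{EPR}}=\sum_{a,b:\,w(a),w(b)\le t}|\phi^+_{ab}\rangle\langle\phi^+_{ab}|$, where $w(\cdot)$ is Hamming weight. *)

theory Defs
  imports Complex_Main "Jordan_Normal_Form.Matrix"
begin

definition dagger :: "complex mat \<Rightarrow> complex mat" where
  "dagger A = mat (dim_col A) (dim_row A) (\<lambda>(i,j). cnj (A $$ (j,i)))"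

definition tr :: "complex mat \<Rightarrow> complex" where
  "tr A = (\<Sum>i<dim_row A. A $$ (i,i))"

(* Kronecker (tensor) product; index of A is the more significant one *)
definition kron :: "complex mat \<Rightarrow> complex mat \<Rightarrow> complex mat" where
  "kron A B = mat (dim_row A * dim_row B) (dim_col A * dim_col B)
     (\<lambda>(i,j). A $$ (i div dim_row B, j div dim_col B) * B $$ (i mod dim_row B, j mod dim_col B))"

definition msum :: "nat \<Rightarrow> nat \<Rightarrow> complex mat list \<Rightarrow> complex mat" where
  "msum n k Ms = foldr (+) Ms (0\<^sub>m n k)"

definition density_matrix :: "nat \<Rightarrow> complex mat \<Rightarrow> bool" where
  "density_matrix n \<rho> \<longleftrightarrow> \<rho> \<in> carrier_mat n n \<and> dagger \<rho> = \<rho> \<and>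
     (\<forall>v \<in> carrier_vec n. 0 \<le> Re (conjugate v \<bullet> (\<rho> *\<^sub>v v))) \<and> tr \<rho> = 1"

definition is_projector :: "nat \<Rightarrow> complex mat \<Rightarrow> bool" where
  "is_projector n P \<longleftrightarrow> P \<in> carrier_mat n n \<and> dagger P = P \<and> P * P = P"

definition hadamard :: "complex mat" where
  "hadamard = mat 2 2 (\<lambda>(i,j). (if i = 1 \<and> j = 1 then -1 else 1) / complex_of_real (sqrt 2))"

definition pauliX :: "complex mat" where
  "pauliX = mat 2 2 (\<lambda>(i,j). if i \<noteq> j then 1 else 0)"

definition pauliZ :: "complex mat" where
  "pauliZ = mat 2 2 (\<lambda>(i,j). if i = j then (if i = 0 then 1 else -1) else 0)"

definition tensor_pow :: "complex mat \<Rightarrow> bool list \<Rightarrow> complex mat" where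
  "tensor_pow G bs = foldr (\<lambda>b M. kron (if b then G else 1\<^sub>m 2) M) bs (1\<^sub>m 1)"

abbreviation Hpow :: "bool list \<Rightarrow> complex mat" where "Hpow \<theta> \<equiv> tensor_pow hadamard \<theta>"
abbreviation Xpow :: "bool list \<Rightarrow> complex mat" where "Xpow a \<equiv> tensor_pow pauliX a"
abbreviation Zpow :: "bool list \<Rightarrow> complex mat" where "Zpow b \<equiv> tensor_pow pauliZ b"

(* Computational basis ket |v> of an m-qubit register; v < 2^m encodes the bit string
   with the first qubit as most significant bit (consistent with kron). *)
definition ket :: "nat \<Rightarrow> nat \<Rightarrow> complex mat" where
  "ket m v = mat (2^m) 1 (\<lambda>(i,j). if i = v then 1 else 0)"

definition hamming_weight :: "bool list \<Rightarrow> nat" where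
  "hamming_weight a = length (filter id a)"

definition epr_ket :: "nat \<Rightarrow> bool list \<Rightarrow> bool list \<Rightarrow> complex mat" where
  "epr_ket m a b = complex_of_real (1 / sqrt (2 ^ m)) \<cdot>\<^sub>m
     msum (2^m * 2^m) 1 (map (\<lambda>v. kron (ket m v) (Xpow a * Zpow b * ket m v)) [0..<2^m])"

definition bitstrings :: "nat \<Rightarrow> bool list list" where
  "bitstrings m = List.n_lists m [True, False]"

definition Pi_EPR :: "nat \<Rightarrow> nat \<Rightarrow> complex mat" where
  "Pi_EPR m t = msum (2^m * 2^m) (2^m * 2^m)
     (map (\<lambda>(a,b). epr_ket m a b * dagger (epr_ket m a b))
        (filter (\<lambda>(a,b). hamming_weight a \<le> t \<and> hamming_weight b \<le> t)
           (List.product (bitstrings m) (bitstrings m))))"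

end

theory Submission
  imports Defs
begin

text \<open>Write \<open>\<Pi>\<^sup>E\<^sup>P\<^sup>R\<^sub>t = \<Sum>\<^sub>k |\<psi>\<^sub>k\<rangle>\<langle>\<psi>\<^sub>k|\<close> over the \<open>N \<le> (m+1)\<^sup>2\<^sup>t\<close> pairs \<open>(a,b)\<close> of weight at most
  \<open>t\<close>, and \<open>K\<^sub>k = |\<psi>\<^sub>k\<rangle> \<otimes> 1\<^sub>R\<close>, so that \<open>P = \<Pi>\<^sup>E\<^sup>P\<^sup>R\<^sub>t \<otimes> 1\<^sub>R = \<Sum>\<^sub>k K\<^sub>k K\<^sub>k\<^sup>\<dagger>\<close>.
  Since \<open>P\<rho> = \<rho>\<close>, the weight \<open>tr (M\<^sub>v \<rho>)\<close> of the projector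
  \<open>M\<^sub>v = H\<^sup>\<theta>|v\<rangle>\<langle>v|H\<^sup>\<theta> \<otimes> 1\<^sub>Y \<otimes> \<Pi>\<^sub>v\<close> is the squared \<open>\<rho>\<close>-norm of
  \<open>M\<^sub>v P = \<Sum>\<^sub>k M\<^sub>v K\<^sub>k K\<^sub>k\<^sup>\<dagger>\<close>, which by Cauchy--Schwarz is at most
  \<open>N \<Sum>\<^sub>k tr (K\<^sub>k (K\<^sub>k\<^sup>\<dagger> M\<^sub>v K\<^sub>k) K\<^sub>k\<^sup>\<dagger> \<rho>)\<close>. Each \<open>\<psi>\<^sub>k\<close> is maximally entangled, so
  \<open>K\<^sub>k\<^sup>\<dagger> M\<^sub>v K\<^sub>k = 2\<^sup>-\<^sup>m \<Pi>\<^sub>v\<close>. Summing over \<open>v\<close> with \<open>\<Sum>\<^sub>v \<Pi>\<^sub>v = 1\<close> and then over \<open>k\<close> with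
  \<open>\<Sum>\<^sub>k tr (K\<^sub>k K\<^sub>k\<^sup>\<dagger> \<rho>) = tr \<rho> = 1\<close> leaves \<open>N 2\<^sup>-\<^sup>m\<close>.\<close>

section \<open>Adjoint, trace, Kronecker product and matrix sums\<close>

lemma sum_lessThan_mult_split:
  fixes f :: "nat \<Rightarrow> 'a::comm_monoid_add"
  shows "(\<Sum>i<a*b. f i) = (\<Sum>x<a. \<Sum>y<b. f (x*b+y))"
proof -
  have "(\<Sum>i<a*b. f i) = (\<Sum>x<a. sum f {x*b..<x*b+b})"
    using sum.nat_group[of f b a] by (simp add: mult.commute)
  also have "\<dots> = (\<Sum>x<a. \<Sum>y<b. f (x*b+y))"
  proof (rule sum.cong[OF refl])
    fix x
    have "sum f {0 + x*b..<b + x*b} = sum (\<lambda>i. f (i + x*b)) {0..<b}"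
      by (rule sum.shift_bounds_nat_ivl)
    then show "sum f {x*b..<x*b+b} = (\<Sum>y<b. f (x*b+y))"
      by (simp add: atLeast0LessThan add.commute)
  qed
  finally show ?thesis .
qed

lemma mult_add_less_mult: "x < (a::nat) \<Longrightarrow> y < b \<Longrightarrow> x*b+y < a*b"
proof -
  assume x: "x < a" and y: "y < b"
  have "x*b + y < (x+1)*b" using y by simp
  also have "(x+1)*b \<le> a*b" using x by (intro mult_le_mono1) simp
  finally show ?thesis .
qed

lemma div_less_of_less_mult: "i < a * b \<Longrightarrow> i div b < (a::nat)"
  by (simp add: less_mult_imp_div_less)

lemma mod_less_of_less_mult: "i < a * b \<Longrightarrow> i mod b < (b::nat)"
  by (cases "b = 0") auto

lemma dagger_dim[simp]: "dim_row (dagger A) = dim_col A" "dim_col (dagger A) = dim_row A"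
  by (auto simp: dagger_def)

lemma dagger_index[simp]: "i < dim_col A \<Longrightarrow> j < dim_row A \<Longrightarrow> dagger A $$ (i,j) = cnj (A $$ (j,i))"
  unfolding dagger_def by simp

lemma dagger_carrier[simp]: "A \<in> carrier_mat a b \<Longrightarrow> dagger A \<in> carrier_mat b a"
  unfolding carrier_mat_def by simp

lemma dagger_dagger[simp]: "dagger (dagger A) = A"
  by (rule eq_matI) auto

lemma dagger_mult:
  "A \<in> carrier_mat a n \<Longrightarrow> B \<in> carrier_mat n b \<Longrightarrow> dagger (A*B) = dagger B * dagger A"
  by (intro eq_matI) (auto simp: scalar_prod_def ac_simps)

lemma dagger_add:
  "A \<in> carrier_mat a b \<Longrightarrow> B \<in> carrier_mat a b \<Longrightarrow> dagger (A+B) = dagger A + dagger B"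
  by (intro eq_matI) auto

lemma dagger_one[simp]: "dagger (1\<^sub>m n) = 1\<^sub>m n"
  by (intro eq_matI) auto

lemma dagger_zero[simp]: "dagger (0\<^sub>m a b) = 0\<^sub>m b a"
  by (intro eq_matI) auto

lemma dagger_mult_self_dagger: "A \<in> carrier_mat a b \<Longrightarrow> dagger (A * dagger A) = A * dagger A"
  using dagger_mult[of A a b "dagger A" a] by simp

lemma tr_mult_comm:
  assumes "A \<in> carrier_mat a b" "B \<in> carrier_mat b a"
  shows "tr (A*B) = tr (B*A)"
proof -
  have "tr (A*B) = (\<Sum>i<a. \<Sum>k<b. A$$(i,k) * B$$(k,i))"
    using assms by (auto simp: tr_def scalar_prod_def atLeast0LessThan intro!: sum.cong)
  also have "\<dots> = (\<Sum>k<b. \<Sum>i<a. B$$(k,i) * A$$(i,k))"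
    by (subst sum.swap) (simp add: ac_simps)
  also have "\<dots> = tr (B*A)"
    using assms by (auto simp: tr_def scalar_prod_def atLeast0LessThan intro!: sum.cong)
  finally show ?thesis .
qed

lemma tr_add: "A \<in> carrier_mat n n \<Longrightarrow> B \<in> carrier_mat n n \<Longrightarrow> tr (A+B) = tr A + tr B"
  by (auto simp: tr_def sum.distrib)

lemma tr_smult: "A \<in> carrier_mat n n \<Longrightarrow> tr (c \<cdot>\<^sub>m A) = c * tr A"
  by (auto simp: tr_def sum_distrib_left intro!: sum.cong)

lemma tr_zero[simp]: "tr (0\<^sub>m n n) = 0"
  by (auto simp: tr_def)

lemma kron_dim[simp]:
  "dim_row (kron A B) = dim_row A * dim_row B" "dim_col (kron A B) = dim_col A * dim_col B"
  by (auto simp: kron_def)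

lemma kron_index[simp]: "i < dim_row A * dim_row B \<Longrightarrow> j < dim_col A * dim_col B \<Longrightarrow>
   kron A B $$ (i,j) = A $$ (i div dim_row B, j div dim_col B) * B $$ (i mod dim_row B, j mod dim_col B)"
  by (auto simp: kron_def)

lemma kron_carrier[simp]:
  "A \<in> carrier_mat a b \<Longrightarrow> B \<in> carrier_mat c e \<Longrightarrow> kron A B \<in> carrier_mat (a*c) (b*e)"
  unfolding carrier_mat_def by simp

lemma kron_mult:
  assumes A: "A \<in> carrier_mat a1 a2" and B: "B \<in> carrier_mat b1 b2"
    and C: "C \<in> carrier_mat a2 a3" and D: "D \<in> carrier_mat b2 b3"
  shows "kron A B * kron C D = kron (A*C) (B*D)"
proof (rule eq_matI)
  fix i j assume "i < dim_row (kron (A*C) (B*D))" and "j < dim_col (kron (A*C) (B*D))"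
  then have i: "i < a1*b1" and j: "j < a3*b3" using A B C D by auto
  have "(kron A B * kron C D) $$ (i,j) = (\<Sum>k<a2*b2. kron A B $$ (i,k) * kron C D $$ (k,j))"
    using i j A B C D by (auto simp: scalar_prod_def atLeast0LessThan intro!: sum.cong)
  also have "\<dots> = (\<Sum>x<a2. \<Sum>y<b2. kron A B $$ (i,x*b2+y) * kron C D $$ (x*b2+y,j))"
    by (rule sum_lessThan_mult_split)
  also have "\<dots> = (\<Sum>x<a2. \<Sum>y<b2. (A $$ (i div b1, x) * C $$ (x, j div b3)) *
                                     (B $$ (i mod b1, y) * D $$ (y, j mod b3)))"
  proof (intro sum.cong refl)
    fix x y assume "x \<in> {..<a2}" and y: "y \<in> {..<b2}"
    then have "x*b2+y < a2*b2" by (simp add: mult_add_less_mult)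
    moreover have "(x*b2+y) div b2 = x" "(x*b2+y) mod b2 = y" using y by auto
    ultimately show "kron A B $$ (i,x*b2+y) * kron C D $$ (x*b2+y,j) =
        (A $$ (i div b1, x) * C $$ (x, j div b3)) * (B $$ (i mod b1, y) * D $$ (y, j mod b3))"
      using A B C D i j by (simp add: ac_simps)
  qed
  also have "\<dots> = (\<Sum>x<a2. A $$ (i div b1, x) * C $$ (x, j div b3)) *
                  (\<Sum>y<b2. B $$ (i mod b1, y) * D $$ (y, j mod b3))"
    by (simp only: sum_product)
  also have "\<dots> = kron (A*C) (B*D) $$ (i,j)"
    using A B C D i j div_less_of_less_mult[OF i] mod_less_of_less_mult[OF i]
      div_less_of_less_mult[OF j] mod_less_of_less_mult[OF j]
    by (simp add: scalar_prod_def atLeast0LessThan)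
  finally show "(kron A B * kron C D) $$ (i,j) = kron (A*C) (B*D) $$ (i,j)" .
qed (use A B C D in simp)+

lemma dagger_kron: "dagger (kron A B) = kron (dagger A) (dagger B)"
proof (rule eq_matI)
  fix i j assume "i < dim_row (kron (dagger A) (dagger B))" "j < dim_col (kron (dagger A) (dagger B))"
  then have i: "i < dim_col A * dim_col B" and j: "j < dim_row A * dim_row B" by auto
  show "dagger (kron A B) $$ (i,j) = kron (dagger A) (dagger B) $$ (i,j)"
    using i j div_less_of_less_mult[OF i] mod_less_of_less_mult[OF i]
      div_less_of_less_mult[OF j] mod_less_of_less_mult[OF j] by simp
qed auto

lemma kron_one: "kron (1\<^sub>m a) (1\<^sub>m b) = 1\<^sub>m (a*b)"
proof (rule eq_matI)
  fix i j assume "i < dim_row (1\<^sub>m (a*b))" "j < dim_col (1\<^sub>m (a*b))"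
  then have i: "i < a*b" and j: "j < a*b" by auto
  have "(i div b = j div b \<and> i mod b = j mod b) = (i = j)"
    by (metis div_mult_mod_eq)
  then show "kron (1\<^sub>m a) (1\<^sub>m b) $$ (i,j) = 1\<^sub>m (a*b) $$ (i,j)"
    using i j div_less_of_less_mult[OF i] mod_less_of_less_mult[OF i]
      div_less_of_less_mult[OF j] mod_less_of_less_mult[OF j] by auto
qed auto

lemma kron_add_left:
  assumes "A \<in> carrier_mat a b" "A' \<in> carrier_mat a b"
  shows "kron (A + A') B = kron A B + kron A' B"
proof (rule eq_matI)
  fix i j assume "i < dim_row (kron A B + kron A' B)" "j < dim_col (kron A B + kron A' B)"
  then have i: "i < a * dim_row B" and j: "j < b * dim_col B" using assms by auto
  show "kron (A + A') B $$ (i,j) = (kron A B + kron A' B) $$ (i,j)"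
    using assms i j div_less_of_less_mult[OF i] mod_less_of_less_mult[OF i]
      div_less_of_less_mult[OF j] mod_less_of_less_mult[OF j] by (simp add: algebra_simps)
qed (use assms in auto)

lemma kron_zero_left: "kron (0\<^sub>m a b) B = 0\<^sub>m (a * dim_row B) (b * dim_col B)"
proof (rule eq_matI)
  fix i j assume "i < dim_row (0\<^sub>m (a * dim_row B) (b * dim_col B))"
    "j < dim_col (0\<^sub>m (a * dim_row B) (b * dim_col B))"
  then have i: "i < a * dim_row B" and j: "j < b * dim_col B" by auto
  show "kron (0\<^sub>m a b) B $$ (i,j) = 0\<^sub>m (a * dim_row B) (b * dim_col B) $$ (i,j)"
    using i j div_less_of_less_mult[OF i] mod_less_of_less_mult[OF i]
      div_less_of_less_mult[OF j] mod_less_of_less_mult[OF j] by simp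
qed auto

lemma kron_scalar_left: "A \<in> carrier_mat 1 1 \<Longrightarrow> kron A B = A $$ (0,0) \<cdot>\<^sub>m B"
  by (intro eq_matI) auto

lemma msum_Nil[simp]: "msum n k [] = 0\<^sub>m n k"
  by (simp add: msum_def)

lemma msum_Cons[simp]: "msum n k (M # Ms) = M + msum n k Ms"
  by (simp add: msum_def)

lemma msum_carrier[simp]:
  "(\<And>M. M \<in> set Ms \<Longrightarrow> M \<in> carrier_mat n k) \<Longrightarrow> msum n k Ms \<in> carrier_mat n k"
  by (induction Ms) auto

lemma msum_mult_left:
  assumes "A \<in> carrier_mat a n" "\<And>M. M \<in> set Ms \<Longrightarrow> M \<in> carrier_mat n k"
  shows "A * msum n k Ms = msum a k (map ((*) A) Ms)"
  using assms(2)
  by (induction Ms) (use assms(1) in \<open>auto simp: mult_add_distrib_mat[where nr=a and n=n and nc=k]\<close>)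

lemma msum_mult_right:
  assumes "B \<in> carrier_mat k q" "\<And>M. M \<in> set Ms \<Longrightarrow> M \<in> carrier_mat n k"
  shows "msum n k Ms * B = msum n q (map (\<lambda>M. M * B) Ms)"
  using assms(2)
  by (induction Ms) (use assms(1) in \<open>auto simp: add_mult_distrib_mat[where nr=n and n=k and nc=q]\<close>)

lemma dagger_msum:
  "(\<And>M. M \<in> set Ms \<Longrightarrow> M \<in> carrier_mat n k) \<Longrightarrow> dagger (msum n k Ms) = msum k n (map dagger Ms)"
  by (induction Ms) (auto simp: dagger_add[of _ n k])

lemma kron_msum_left:
  "(\<And>M. M \<in> set Ms \<Longrightarrow> M \<in> carrier_mat n k) \<Longrightarrow>
   kron (msum n k Ms) B = msum (n * dim_row B) (k * dim_col B) (map (\<lambda>M. kron M B) Ms)"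
  by (induction Ms) (auto simp: kron_zero_left kron_add_left[of _ n k])

lemma tr_msum:
  "(\<And>M. M \<in> set Ms \<Longrightarrow> M \<in> carrier_mat n n) \<Longrightarrow> tr (msum n n Ms) = (\<Sum>M\<leftarrow>Ms. tr M)"
  by (induction Ms) (auto simp: tr_add[of _ n])

lemma msum_index:
  assumes "\<And>M. M \<in> set Ms \<Longrightarrow> M \<in> carrier_mat n k" "i < n" "j < k"
  shows "msum n k Ms $$ (i,j) = (\<Sum>M\<leftarrow>Ms. M $$ (i,j))"
  using assms(1)
proof (induction Ms)
  case (Cons M Ms)
  have "msum n k Ms \<in> carrier_mat n k" using Cons.prems by auto
  then have "dim_row (msum n k Ms) = n" "dim_col (msum n k Ms) = k" by auto
  with Cons assms(2,3) show ?case by simp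
qed (use assms(2,3) in simp)

lemma is_projector_one: "is_projector n (1\<^sub>m n)"
  by (simp add: is_projector_def)

lemma is_projector_kron:
  assumes A: "is_projector a A" and B: "is_projector b B"
  shows "is_projector (a*b) (kron A B)"
proof -
  have A': "A \<in> carrier_mat a a" and B': "B \<in> carrier_mat b b"
    using A B by (auto simp: is_projector_def)
  have "kron A B * kron A B = kron (A*A) (B*B)" by (rule kron_mult[OF A' B' A' B'])
  with A B show ?thesis by (auto simp: is_projector_def dagger_kron)
qed

lemma is_projector_outer:
  assumes w: "w \<in> carrier_mat n 1" and unit: "dagger w * w = 1\<^sub>m 1"
  shows "is_projector n (w * dagger w)"
proof -
  have wd: "dagger w \<in> carrier_mat 1 n" using w by simp
  have "(w * dagger w) * (w * dagger w) = w * (dagger w * (w * dagger w))"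
    by (rule assoc_mult_mat[OF w wd mult_carrier_mat[OF w wd]])
  also have "dagger w * (w * dagger w) = (dagger w * w) * dagger w"
    by (rule assoc_mult_mat[OF wd w wd, symmetric])
  also have "\<dots> = dagger w"
    unfolding unit by (rule left_mult_one_mat[OF wd])
  finally show ?thesis
    using mult_carrier_mat[OF w wd] dagger_mult_self_dagger[OF w] by (simp add: is_projector_def)
qed

lemma tr_outer:
  assumes "w \<in> carrier_mat n 1" "dagger w * w = 1\<^sub>m 1"
  shows "tr (w * dagger w) = 1"
  using tr_mult_comm[OF assms(1) dagger_carrier[OF assms(1)]] assms(2) by (simp add: tr_def)

lemma isometry_mult:
  assumes A: "A \<in> carrier_mat n n" "dagger A * A = 1\<^sub>m n"
    and B: "B \<in> carrier_mat n k" "dagger B * B = 1\<^sub>m k"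
  shows "dagger (A * B) * (A * B) = 1\<^sub>m k"
proof -
  have dA: "dagger A \<in> carrier_mat n n" and dB: "dagger B \<in> carrier_mat k n"
    using A B by simp_all
  have "dagger (A * B) * (A * B) = dagger B * dagger A * (A * B)"
    by (simp only: dagger_mult[OF A(1) B(1)])
  also have "\<dots> = dagger B * (dagger A * (A * B))"
    by (rule assoc_mult_mat[OF dB dA mult_carrier_mat[OF A(1) B(1)]])
  also have "dagger A * (A * B) = (dagger A * A) * B"
    by (rule assoc_mult_mat[OF dA A(1) B(1), symmetric])
  also have "\<dots> = B"
    unfolding A(2) by (rule left_mult_one_mat[OF B(1)])
  finally show ?thesis using B(2) by simp
qed

lemma mat2_eqI:
  assumes "A \<in> carrier_mat 2 2" "B \<in> carrier_mat 2 2"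
    "A$$(0,0) = B$$(0,0)" "A$$(0,1) = B$$(0,1)" "A$$(1,0) = B$$(1,0)" "A$$(1,1) = B$$(1,1)"
  shows "A = B"
proof (rule eq_matI)
  fix i j assume "i < dim_row B" "j < dim_col B"
  then have "i < 2" "j < 2" using assms(2) by auto
  then have "(i = 0 \<or> i = 1) \<and> (j = 0 \<or> j = 1)" by linarith
  then show "A $$ (i,j) = B $$ (i,j)" using assms(3-6) by blast
qed (use assms in simp)+

lemma mult_mat2_index:
  assumes "A \<in> carrier_mat 2 2" "B \<in> carrier_mat 2 2" "i < 2" "j < 2"
  shows "(A*B)$$(i,j) = A$$(i,0)*B$$(0,j) + A$$(i,1)*B$$(1,j)"
  using assms by (simp add: scalar_prod_def numeral_2_eq_2)

lemma hadamard_carrier[simp]: "hadamard \<in> carrier_mat 2 2"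
  by (simp add: hadamard_def)

lemma pauliX_carrier[simp]: "pauliX \<in> carrier_mat 2 2"
  by (simp add: pauliX_def)

lemma pauliZ_carrier[simp]: "pauliZ \<in> carrier_mat 2 2"
  by (simp add: pauliZ_def)

lemma dagger_hadamard[simp]: "dagger hadamard = hadamard"
  by (rule mat2_eqI) (simp_all add: hadamard_def)

lemma hadamard_unitary: "dagger hadamard * hadamard = 1\<^sub>m 2"
proof -
  have "1 / complex_of_real (sqrt 2) * (1 / complex_of_real (sqrt 2)) = 1 / 2"
    by (simp flip: of_real_mult)
  then show ?thesis
    unfolding dagger_hadamard
    by (intro mat2_eqI mult_carrier_mat[OF hadamard_carrier hadamard_carrier])
      (simp_all add: mult_mat2_index[OF hadamard_carrier hadamard_carrier], simp_all add: hadamard_def)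
qed

lemma pauliX_unitary: "dagger pauliX * pauliX = 1\<^sub>m 2"
  by (intro mat2_eqI mult_carrier_mat[OF dagger_carrier pauliX_carrier])
    (simp_all add: mult_mat2_index, simp_all add: pauliX_def)

lemma pauliZ_unitary: "dagger pauliZ * pauliZ = 1\<^sub>m 2"
  by (intro mat2_eqI mult_carrier_mat[OF dagger_carrier pauliZ_carrier])
    (simp_all add: mult_mat2_index, simp_all add: pauliZ_def)

lemma tensor_pow_Nil[simp]: "tensor_pow G [] = 1\<^sub>m 1"
  by (simp add: tensor_pow_def)

lemma tensor_pow_Cons[simp]:
  "tensor_pow G (b # bs) = kron (if b then G else 1\<^sub>m 2) (tensor_pow G bs)"
  by (simp add: tensor_pow_def)

lemma tensor_pow_carrier[simp]:
  "G \<in> carrier_mat 2 2 \<Longrightarrow> tensor_pow G bs \<in> carrier_mat (2^length bs) (2^length bs)"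
  by (induction bs) (auto dest: kron_carrier[of "if _ then G else 1\<^sub>m 2" 2 2])

lemma dagger_tensor_pow: "dagger (tensor_pow G bs) = tensor_pow (dagger G) bs"
  by (induction bs) (auto simp: dagger_kron)

lemma tensor_pow_unitary:
  assumes "G \<in> carrier_mat 2 2" "dagger G * G = 1\<^sub>m 2"
  shows "dagger (tensor_pow G bs) * tensor_pow G bs = 1\<^sub>m (2^length bs)"
proof (induction bs)
  case (Cons b bs)
  let ?A = "if b then G else 1\<^sub>m 2" and ?T = "tensor_pow G bs"
  have A: "?A \<in> carrier_mat 2 2" and T: "?T \<in> carrier_mat (2^length bs) (2^length bs)"
    using assms by auto
  have "dagger (tensor_pow G (b#bs)) * tensor_pow G (b#bs) = kron (dagger ?A * ?A) (dagger ?T * ?T)"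
    by (simp add: dagger_kron kron_mult[OF dagger_carrier[OF A] dagger_carrier[OF T] A T])
  also have "\<dots> = 1\<^sub>m (2^length (b#bs))" using assms Cons.IH by (simp add: kron_one)
  finally show ?case .
qed (simp add: kron_one[of 1 1, simplified])

section \<open>Basis states and maximally entangled states\<close>

lemma ket_carrier[simp]: "ket m v \<in> carrier_mat (2^m) 1"
  unfolding ket_def carrier_mat_def by simp

lemma ket_dim[simp]: "dim_row (ket m v) = 2^m" "dim_col (ket m v) = 1"
  by (simp_all add: ket_def)

lemma ket_index: "i < 2^m \<Longrightarrow> ket m v $$ (i,0) = (if i = v then 1 else 0)"
  by (simp add: ket_def)

lemma ket_unit: "v < 2^m \<Longrightarrow> dagger (ket m v) * ket m v = 1\<^sub>m 1"
  by (intro eq_matI) (auto simp: scalar_prod_def ket_def if_distrib cong: if_cong)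

lemma mult_ket_index:
  assumes "U \<in> carrier_mat n (2^m)" "r < n" "v < 2^m"
  shows "(U * ket m v) $$ (r,0) = U $$ (r,v)"
proof -
  have "(U * ket m v) $$ (r,0) = (\<Sum>k\<in>{0..<2^m}. U $$ (r,k) * ket m v $$ (k,0))"
    using assms by (auto simp: scalar_prod_def ket_def)
  also have "\<dots> = (\<Sum>k\<in>{0..<2^m}. if k = v then U $$ (r,k) else 0)"
    by (rule sum.cong) (simp_all add: ket_index)
  finally show ?thesis using assms(3) by simp
qed

lemma dagger_Hpow: "dagger (Hpow \<theta>) = Hpow \<theta>"
  by (simp add: dagger_tensor_pow)

lemma Hpow_basis_projector:
  assumes "length \<theta> = m" "v < 2^m"
  shows "is_projector (2^m) (Hpow \<theta> * ket m v * dagger (ket m v) * Hpow \<theta>)"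
    and "tr (Hpow \<theta> * ket m v * dagger (ket m v) * Hpow \<theta>) = 1"
proof -
  let ?w = "Hpow \<theta> * ket m v"
  have H: "Hpow \<theta> \<in> carrier_mat (2^m) (2^m)" using assms(1) by auto
  have w: "?w \<in> carrier_mat (2^m) 1" using mult_carrier_mat[OF H ket_carrier] .
  have "dagger ?w * ?w = 1\<^sub>m 1"
    by (rule isometry_mult[OF H _ ket_carrier ket_unit[OF assms(2)]])
      (use tensor_pow_unitary[OF hadamard_carrier hadamard_unitary] assms(1) in simp)
  moreover have "Hpow \<theta> * ket m v * dagger (ket m v) * Hpow \<theta> = ?w * dagger ?w"
    unfolding dagger_mult[OF H ket_carrier] dagger_Hpow
    by (rule assoc_mult_mat[OF w dagger_carrier[OF ket_carrier] H])
  ultimately show "is_projector (2^m) (Hpow \<theta> * ket m v * dagger (ket m v) * Hpow \<theta>)"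
    and "tr (Hpow \<theta> * ket m v * dagger (ket m v) * Hpow \<theta>) = 1"
    using is_projector_outer[OF w] tr_outer[OF w] by simp_all
qed

lemma Pauli_product_carrier:
  "length a = m \<Longrightarrow> length b = m \<Longrightarrow> Xpow a * Zpow b \<in> carrier_mat (2^m) (2^m)"
  by (metis mult_carrier_mat pauliX_carrier pauliZ_carrier tensor_pow_carrier)

lemma Pauli_product_unitary:
  assumes "length a = m" "length b = m"
  shows "dagger (Xpow a * Zpow b) * (Xpow a * Zpow b) = 1\<^sub>m (2^m)"
proof (rule isometry_mult)
  show "Xpow a \<in> carrier_mat (2^m) (2^m)" "Zpow b \<in> carrier_mat (2^m) (2^m)"
    using assms tensor_pow_carrier[OF pauliX_carrier, of a] tensor_pow_carrier[OF pauliZ_carrier, of b]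
    by simp_all
  show "dagger (Xpow a) * Xpow a = 1\<^sub>m (2^m)" "dagger (Zpow b) * Zpow b = 1\<^sub>m (2^m)"
    using assms tensor_pow_unitary[OF pauliX_carrier pauliX_unitary, of a]
      tensor_pow_unitary[OF pauliZ_carrier pauliZ_unitary, of b]
    by simp_all
qed

lemma epr_summand_carrier:
  "U \<in> carrier_mat (2^m) (2^m) \<Longrightarrow> kron (ket m v) (U * ket m v) \<in> carrier_mat (2^m*2^m) 1"
  using kron_carrier[OF ket_carrier mult_carrier_mat[OF _ ket_carrier]] by simp

lemma epr_ket_carrier:
  assumes "length a = m" "length b = m"
  shows "epr_ket m a b \<in> carrier_mat (2^m*2^m) 1"
proof -
  have "kron (ket m v) (Xpow a * Zpow b * ket m v) \<in> carrier_mat (2^m*2^m) 1" for v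
    using epr_summand_carrier[OF Pauli_product_carrier[OF assms]] .
  then show ?thesis unfolding epr_ket_def by (intro smult_carrier_mat msum_carrier) auto
qed

lemma epr_ket_index:
  assumes "length a = m" "length b = m" "i < 2^m*2^m"
  shows "epr_ket m a b $$ (i,0) =
    complex_of_real (1 / sqrt (2^m)) * (Xpow a * Zpow b) $$ (i mod 2^m, i div 2^m)"
proof -
  let ?U = "Xpow a * Zpow b"
  let ?T = "\<lambda>v. kron (ket m v) (?U * ket m v)"
  have U: "?U \<in> carrier_mat (2^m) (2^m)" using assms(1,2) by (rule Pauli_product_carrier)
  have T: "\<And>M. M \<in> set (map ?T [0..<2^m]) \<Longrightarrow> M \<in> carrier_mat (2^m*2^m) 1"
    using epr_summand_carrier[OF U] by auto
  have im: "i div 2^m < 2^m" "i mod 2^m < 2^m"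
    using assms(3) by (simp_all add: div_less_of_less_mult mod_less_of_less_mult)
  have "msum (2^m*2^m) 1 (map ?T [0..<2^m]) $$ (i,0) = (\<Sum>v\<leftarrow>[0..<2^m]. ?T v $$ (i,0))"
    by (subst msum_index) (use T assms(3) in \<open>auto simp: comp_def\<close>)
  also have "\<dots> = (\<Sum>v\<in>{0..<2^m}. if v = i div 2^m then ?U $$ (i mod 2^m, i div 2^m) else 0)"
    unfolding interv_sum_list_conv_sum_set_nat set_upt
  proof (rule sum.cong[OF refl])
    fix v :: nat assume "v \<in> {0..<2^m}"
    have "?T v $$ (i,0) = ket m v $$ (i div 2^m, 0) * (?U * ket m v) $$ (i mod 2^m, 0)"
      using assms(3) carrier_matD[OF U] by simp
    then show "?T v $$ (i,0) = (if v = i div 2^m then ?U $$ (i mod 2^m, i div 2^m) else 0)"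
      using im \<open>v \<in> {0..<2^m}\<close> U by (simp add: ket_index mult_ket_index)
  qed
  also have "\<dots> = ?U $$ (i mod 2^m, i div 2^m)" using im by simp
  finally have "msum (2^m*2^m) 1 (map ?T [0..<2^m]) $$ (i,0) = ?U $$ (i mod 2^m, i div 2^m)" .
  moreover have "msum (2^m*2^m) 1 (map ?T [0..<2^m]) \<in> carrier_mat (2^m*2^m) 1"
    by (rule msum_carrier) (rule T)
  ultimately show ?thesis using assms(3) unfolding epr_ket_def by simp
qed

text \<open>The amplitude hypothesis says \<open>\<psi> = c \<Sum>\<^sub>x |x\<rangle> \<otimes> U|x\<rangle>\<close>, so the reduced state of the
  first register is \<open>|c|\<^sup>2 1\<close>.\<close>
lemma maximally_entangled_expectation:
  assumes U: "U \<in> carrier_mat n n" and UU: "dagger U * U = 1\<^sub>m n"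
    and Q: "Q \<in> carrier_mat n n" and \<psi>: "\<psi> \<in> carrier_mat (n*n) 1"
    and amplitudes: "\<And>i. i < n*n \<Longrightarrow> \<psi>$$(i,0) = c * U$$(i mod n, i div n)"
  shows "(dagger \<psi> * kron Q (1\<^sub>m n) * \<psi>)$$(0,0) = cnj c * c * tr Q"
proof -
  let ?K = "kron Q (1\<^sub>m n)"
  have K: "?K \<in> carrier_mat (n*n) (n*n)" using Q by simp
  have columns: "(\<Sum>y<n. cnj (U$$(y,x)) * U$$(y,x')) = (if x = x' then 1 else 0)"
    if "x < n" "x' < n" for x x'
  proof -
    have "(dagger U * U)$$(x,x') = (\<Sum>y<n. cnj (U$$(y,x)) * U$$(y,x'))"
      using U that by (simp add: scalar_prod_def atLeast0LessThan)
    then show ?thesis using UU that by simp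
  qed
  have K_index: "?K $$ (x*n+y, x'*n+y') = Q$$(x,x') * (if y = y' then 1 else 0)"
    if "x < n" "y < n" "x' < n" "y' < n" for x y x' y'
    using that Q mult_add_less_mult[of x n y n] mult_add_less_mult[of x' n y' n] by simp
  have \<psi>_index: "\<psi>$$(x*n+y,0) = c * U$$(y,x)" if "x < n" "y < n" for x y
    using that amplitudes[OF mult_add_less_mult[OF that]] by simp
  have dims: "dim_row Q = n" "dim_col Q = n" "dim_row \<psi> = n*n" "dim_col \<psi> = 1"
    using Q \<psi> by auto
  have "(dagger \<psi> * ?K * \<psi>)$$(0,0) = (\<Sum>i<n*n. (dagger \<psi> * ?K)$$(0,i) * \<psi>$$(i,0))"
    using dims by (simp add: scalar_prod_def atLeast0LessThan)
  also have "\<dots> = (\<Sum>i<n*n. (\<Sum>j<n*n. cnj (\<psi>$$(j,0)) * ?K$$(j,i)) * \<psi>$$(i,0))"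
    by (rule sum.cong) (use dims in \<open>simp_all add: scalar_prod_def atLeast0LessThan\<close>)
  also have "\<dots> = (\<Sum>j<n*n. \<Sum>i<n*n. cnj (\<psi>$$(j,0)) * ?K$$(j,i) * \<psi>$$(i,0))"
    by (simp add: sum_distrib_right, rule sum.swap)
  also have "\<dots> = (\<Sum>x<n. \<Sum>y<n. \<Sum>x'<n. \<Sum>y'<n.
      cnj (\<psi>$$(x*n+y,0)) * ?K$$(x*n+y,x'*n+y') * \<psi>$$(x'*n+y',0))"
    by (simp only: sum_lessThan_mult_split)
  also have "\<dots> = (\<Sum>x<n. \<Sum>y<n. \<Sum>x'<n. \<Sum>y'<n.
      if y = y' then cnj c * c * (cnj (U$$(y,x)) * Q$$(x,x') * U$$(y,x')) else 0)"
    by (intro sum.cong refl) (simp add: K_index \<psi>_index)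
  also have "\<dots> = (\<Sum>x<n. \<Sum>y<n. \<Sum>x'<n. cnj c * c * (cnj (U$$(y,x)) * Q$$(x,x') * U$$(y,x')))"
    by (intro sum.cong refl) simp
  also have "\<dots> = (\<Sum>x<n. \<Sum>x'<n. cnj c * c * (Q$$(x,x') * (\<Sum>y<n. cnj (U$$(y,x)) * U$$(y,x'))))"
    by (rule sum.cong[OF refl], subst sum.swap, rule sum.cong[OF refl])
      (simp add: sum_distrib_left ac_simps)
  also have "\<dots> = (\<Sum>x<n. \<Sum>x'<n. if x = x' then cnj c * c * Q$$(x,x) else 0)"
    by (intro sum.cong refl) (simp add: columns)
  also have "\<dots> = cnj c * c * tr Q"
    using Q by (simp add: tr_def sum_distrib_left)
  finally show ?thesis .
qed

lemma kron_one_sandwich: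
  assumes \<psi>: "\<psi> \<in> carrier_mat n 1" and B: "B \<in> carrier_mat n n" and P: "P \<in> carrier_mat d d"
  shows "dagger (kron \<psi> (1\<^sub>m d)) * kron B P * kron \<psi> (1\<^sub>m d) = (dagger \<psi> * B * \<psi>)$$(0,0) \<cdot>\<^sub>m P"
proof -
  have \<psi>B: "dagger \<psi> * B \<in> carrier_mat 1 n" using mult_carrier_mat[OF dagger_carrier[OF \<psi>] B] .
  have "dagger (kron \<psi> (1\<^sub>m d)) * kron B P * kron \<psi> (1\<^sub>m d) = kron (dagger \<psi> * B * \<psi>) P"
    using kron_mult[OF dagger_carrier[OF \<psi>] one_carrier_mat B P] kron_mult[OF \<psi>B P \<psi> one_carrier_mat] P
    by (simp add: dagger_kron)
  also have "\<dots> = (dagger \<psi> * B * \<psi>)$$(0,0) \<cdot>\<^sub>m P"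
    using \<psi>B \<psi> by (intro kron_scalar_left) simp
  finally show ?thesis .
qed

lemma epr_ket_sandwich:
  assumes a: "length a = m" and b: "length b = m"
    and Q: "Q \<in> carrier_mat (2^m) (2^m)" and P: "P \<in> carrier_mat d d"
  shows "dagger (kron (epr_ket m a b) (1\<^sub>m d)) * kron (kron Q (1\<^sub>m (2^m))) P * kron (epr_ket m a b) (1\<^sub>m d)
    = (tr Q / 2^m) \<cdot>\<^sub>m P"
proof -
  let ?c = "complex_of_real (1 / sqrt (2^m))"
  have "cnj ?c * ?c = complex_of_real (1 / sqrt (2^m) * (1 / sqrt (2^m)))"
    by (simp only: complex_cnj_complex_of_real of_real_mult)
  also have "\<dots> = 1 / 2^m"
    by (simp add: power_divide[symmetric])
  finally have c: "cnj ?c * ?c * tr Q = tr Q / 2^m"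
    by simp
  have "dagger (kron (epr_ket m a b) (1\<^sub>m d)) * kron (kron Q (1\<^sub>m (2^m))) P * kron (epr_ket m a b) (1\<^sub>m d)
      = (dagger (epr_ket m a b) * kron Q (1\<^sub>m (2^m)) * epr_ket m a b)$$(0,0) \<cdot>\<^sub>m P"
    by (rule kron_one_sandwich[OF epr_ket_carrier[OF a b] kron_carrier[OF Q one_carrier_mat] P])
  also have "(dagger (epr_ket m a b) * kron Q (1\<^sub>m (2^m)) * epr_ket m a b)$$(0,0) = cnj ?c * ?c * tr Q"
    by (rule maximally_entangled_expectation[OF Pauli_product_carrier[OF a b]
          Pauli_product_unitary[OF a b] Q epr_ket_carrier[OF a b] epr_ket_index[OF a b]])
  finally show ?thesis
    by (simp only: c)
qed

section \<open>A Cauchy--Schwarz bound for states supported on a sum of blocks\<close>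

definition state_inner :: "complex mat \<Rightarrow> complex mat \<Rightarrow> complex mat \<Rightarrow> complex" where
  "state_inner \<rho> X Y = tr (dagger X * Y * \<rho>)"

lemma state_inner_expand:
  assumes "X \<in> carrier_mat D D" "Y \<in> carrier_mat D D" "\<rho> \<in> carrier_mat D D"
  shows "state_inner \<rho> X Y = (\<Sum>i<D. \<Sum>l<D. \<Sum>k<D. cnj (X$$(k,i)) * Y$$(k,l) * \<rho>$$(l,i))"
proof -
  have d: "dim_row X = D" "dim_col X = D" "dim_row Y = D" "dim_col Y = D"
    "dim_row \<rho> = D" "dim_col \<rho> = D"
    using assms by auto
  have "state_inner \<rho> X Y = (\<Sum>i<D. \<Sum>l<D. (dagger X * Y)$$(i,l) * \<rho>$$(l,i))"
    unfolding state_inner_def tr_def using d by (simp add: scalar_prod_def atLeast0LessThan)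
  also have "\<dots> = (\<Sum>i<D. \<Sum>l<D. (\<Sum>k<D. cnj (X$$(k,i)) * Y$$(k,l)) * \<rho>$$(l,i))"
    by (intro sum.cong refl) (use d in \<open>simp add: scalar_prod_def atLeast0LessThan\<close>)
  finally show ?thesis by (simp add: sum_distrib_right)
qed

lemma state_inner_diff:
  assumes X: "X \<in> carrier_mat D D" and Y: "Y \<in> carrier_mat D D" and \<rho>: "\<rho> \<in> carrier_mat D D"
  shows "state_inner \<rho> (X - Y) (X - Y) =
    state_inner \<rho> X X - state_inner \<rho> X Y - state_inner \<rho> Y X + state_inner \<rho> Y Y"
proof -
  have XY: "X - Y \<in> carrier_mat D D" using Y by (rule minus_carrier_mat)
  have entries: "(X - Y)$$(k,i) = X$$(k,i) - Y$$(k,i)" if "k < D" "i < D" for k i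
    using X Y that by simp
  show ?thesis
    unfolding state_inner_expand[OF XY XY \<rho>] state_inner_expand[OF X X \<rho>] state_inner_expand[OF X Y \<rho>]
      state_inner_expand[OF Y X \<rho>] state_inner_expand[OF Y Y \<rho>]
    by (simp add: entries algebra_simps sum_subtractf sum.distrib)
qed

lemma state_inner_self_nonneg:
  assumes Y: "Y \<in> carrier_mat D D" and \<rho>: "density_matrix D \<rho>"
  shows "0 \<le> Re (state_inner \<rho> Y Y)"
proof -
  have R: "\<rho> \<in> carrier_mat D D" and psd: "\<forall>v \<in> carrier_vec D. 0 \<le> Re (conjugate v \<bullet> (\<rho> *\<^sub>v v))"
    using \<rho> by (auto simp: density_matrix_def)
  define w where "w k = vec D (\<lambda>i. cnj (Y$$(k,i)))" for k
  have q: "conjugate (w k) \<bullet> (\<rho> *\<^sub>v w k) = (\<Sum>l<D. \<Sum>i<D. Y$$(k,l) * \<rho>$$(l,i) * cnj (Y$$(k,i)))" for k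
    using R unfolding w_def by (simp add: scalar_prod_def atLeast0LessThan sum_distrib_left ac_simps)
  have "state_inner \<rho> Y Y = (\<Sum>i<D. \<Sum>l<D. \<Sum>k<D. cnj (Y$$(k,i)) * Y$$(k,l) * \<rho>$$(l,i))"
    by (rule state_inner_expand[OF Y Y R])
  also have "\<dots> = (\<Sum>k<D. \<Sum>l<D. \<Sum>i<D. Y$$(k,l) * \<rho>$$(l,i) * cnj (Y$$(k,i)))"
    by (subst sum.swap, subst (2) sum.swap, rule sum.cong[OF refl], subst sum.swap) (simp add: ac_simps)
  also have "\<dots> = (\<Sum>k<D. conjugate (w k) \<bullet> (\<rho> *\<^sub>v w k))"
    by (simp add: q)
  finally have "Re (state_inner \<rho> Y Y) = (\<Sum>k<D. Re (conjugate (w k) \<bullet> (\<rho> *\<^sub>v w k)))"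
    by simp
  also have "\<dots> \<ge> 0" using psd by (intro sum_nonneg) (simp add: w_def)
  finally show ?thesis .
qed

lemma state_inner_msum_left:
  assumes "\<And>k. k \<in> set ks \<Longrightarrow> X k \<in> carrier_mat D D" and Y: "Y \<in> carrier_mat D D"
    and \<rho>: "\<rho> \<in> carrier_mat D D"
  shows "state_inner \<rho> (msum D D (map X ks)) Y = (\<Sum>k\<leftarrow>ks. state_inner \<rho> (X k) Y)"
  using assms(1)
proof (induction ks)
  case (Cons k ks)
  have Xk: "X k \<in> carrier_mat D D" and S: "msum D D (map X ks) \<in> carrier_mat D D"
    using Cons.prems by (auto intro!: msum_carrier)
  have XkY: "dagger (X k) * Y \<in> carrier_mat D D" and SY: "dagger (msum D D (map X ks)) * Y \<in> carrier_mat D D"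
    using mult_carrier_mat[OF dagger_carrier[OF Xk] Y] mult_carrier_mat[OF dagger_carrier[OF S] Y] .
  have "dagger (msum D D (map X (k # ks))) * Y = dagger (X k) * Y + dagger (msum D D (map X ks)) * Y"
    using add_mult_distrib_mat[OF dagger_carrier[OF Xk] dagger_carrier[OF S] Y] by (simp add: dagger_add[OF Xk S])
  then have "dagger (msum D D (map X (k # ks))) * Y * \<rho> =
      dagger (X k) * Y * \<rho> + dagger (msum D D (map X ks)) * Y * \<rho>"
    using add_mult_distrib_mat[OF XkY SY \<rho>] by simp
  then show ?case
    using Cons mult_carrier_mat[OF XkY \<rho>] mult_carrier_mat[OF SY \<rho>]
    by (simp add: state_inner_def tr_add[of _ D])
qed (use Y \<rho> in \<open>simp add: state_inner_def\<close>)

lemma state_inner_msum_right: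
  assumes "\<And>k. k \<in> set ks \<Longrightarrow> Y k \<in> carrier_mat D D" and X: "X \<in> carrier_mat D D"
    and \<rho>: "\<rho> \<in> carrier_mat D D"
  shows "state_inner \<rho> X (msum D D (map Y ks)) = (\<Sum>k\<leftarrow>ks. state_inner \<rho> X (Y k))"
  using assms(1)
proof (induction ks)
  case (Cons k ks)
  have Yk: "Y k \<in> carrier_mat D D" and S: "msum D D (map Y ks) \<in> carrier_mat D D"
    using Cons.prems by (auto intro!: msum_carrier)
  have XYk: "dagger X * Y k \<in> carrier_mat D D" and XS: "dagger X * msum D D (map Y ks) \<in> carrier_mat D D"
    using mult_carrier_mat[OF dagger_carrier[OF X] Yk] mult_carrier_mat[OF dagger_carrier[OF X] S] .
  have "dagger X * msum D D (map Y (k # ks)) * \<rho> =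
      dagger X * Y k * \<rho> + dagger X * msum D D (map Y ks) * \<rho>"
    using Yk S XYk XS X \<rho>
    by (simp add: mult_add_distrib_mat[of _ D D] add_mult_distrib_mat[of _ D D])
  then show ?case
    using Cons mult_carrier_mat[OF XYk \<rho>] mult_carrier_mat[OF XS \<rho>]
    by (simp add: state_inner_def tr_add[of _ D])
qed (use X \<rho> in \<open>simp add: state_inner_def\<close>)

lemma Re_double_sum_le_card_mult_diagonal:
  fixes h :: "nat \<Rightarrow> nat \<Rightarrow> complex"
  assumes "\<And>k l. k < N \<Longrightarrow> l < N \<Longrightarrow> 0 \<le> Re (h k k - h k l - h l k + h l l)"
  shows "Re (\<Sum>k<N. \<Sum>l<N. h k l) \<le> real N * (\<Sum>k<N. Re (h k k))"
proof -
  have "0 \<le> (\<Sum>k<N. \<Sum>l<N. Re (h k k - h k l - h l k + h l l))"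
    using assms by (intro sum_nonneg) auto
  also have "\<dots> = (\<Sum>k<N. \<Sum>l<N. Re (h k k)) - (\<Sum>k<N. \<Sum>l<N. Re (h k l))
      - (\<Sum>k<N. \<Sum>l<N. Re (h l k)) + (\<Sum>k<N. \<Sum>l<N. Re (h l l))"
    by (simp add: sum_subtractf sum.distrib)
  also have "(\<Sum>k<N. \<Sum>l<N. Re (h l k)) = (\<Sum>k<N. \<Sum>l<N. Re (h k l))"
    by (rule sum.swap)
  also have "(\<Sum>k<N. \<Sum>l<N. Re (h l l)) = (\<Sum>k<N. \<Sum>l<N. Re (h k k))"
    by (rule sum.swap)
  also have "(\<Sum>k<N. \<Sum>l<N. Re (h k k)) = real N * (\<Sum>k<N. Re (h k k))"
    by (simp add: sum_distrib_left mult.commute)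
  finally show ?thesis by (simp add: Re_sum)
qed

lemma state_inner_msum_self_le:
  assumes X: "\<And>k. k < N \<Longrightarrow> X k \<in> carrier_mat D D" and \<rho>: "density_matrix D \<rho>"
  shows "Re (state_inner \<rho> (msum D D (map X [0..<N])) (msum D D (map X [0..<N])))
    \<le> real N * (\<Sum>k<N. Re (state_inner \<rho> (X k) (X k)))"
proof -
  have R: "\<rho> \<in> carrier_mat D D" using \<rho> by (simp add: density_matrix_def)
  have S: "msum D D (map X [0..<N]) \<in> carrier_mat D D" by (rule msum_carrier) (auto intro: X)
  have "state_inner \<rho> (msum D D (map X [0..<N])) (msum D D (map X [0..<N])) =
      (\<Sum>k<N. \<Sum>l<N. state_inner \<rho> (X k) (X l))"
    using state_inner_msum_left[OF _ S R, of "[0..<N]" X] state_inner_msum_right[OF _ X R, of "[0..<N]" X] X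
    by (simp add: interv_sum_list_conv_sum_set_nat atLeast0LessThan)
  also have "Re \<dots> \<le> real N * (\<Sum>k<N. Re (state_inner \<rho> (X k) (X k)))"
  proof (rule Re_double_sum_le_card_mult_diagonal)
    fix k l assume "k < N" "l < N"
    then show "0 \<le> Re (state_inner \<rho> (X k) (X k) - state_inner \<rho> (X k) (X l)
        - state_inner \<rho> (X l) (X k) + state_inner \<rho> (X l) (X l))"
      using state_inner_diff[OF X X R] state_inner_self_nonneg[OF minus_carrier_mat[OF X] \<rho>]
      by metis
  qed
  finally show ?thesis .
qed

lemma tr_mult_msum_mult:
  assumes A: "A \<in> carrier_mat D d" and B: "B \<in> carrier_mat d D"
    and F: "\<And>x. x \<in> set xs \<Longrightarrow> F x \<in> carrier_mat d d"
  shows "tr (A * msum d d (map F xs) * B) = (\<Sum>x\<leftarrow>xs. tr (A * F x * B))"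
  using F
proof (induction xs)
  case (Cons x xs)
  have Fx: "F x \<in> carrier_mat d d" and S: "msum d d (map F xs) \<in> carrier_mat d d"
    using Cons.prems by (auto intro!: msum_carrier)
  have AFx: "A * F x \<in> carrier_mat D d" and AS: "A * msum d d (map F xs) \<in> carrier_mat D d"
    using mult_carrier_mat[OF A Fx] mult_carrier_mat[OF A S] .
  have "A * msum d d (map F (x # xs)) * B = A * F x * B + A * msum d d (map F xs) * B"
    using mult_add_distrib_mat[OF A Fx S] add_mult_distrib_mat[OF AFx AS B] by simp
  then show ?case
    using Cons mult_carrier_mat[OF AFx B] mult_carrier_mat[OF AS B] by (simp add: tr_add[of _ D])
qed (use A B in simp)

text \<open>Taking adjoints, \<open>P\<rho> = \<rho>\<close> gives \<open>\<rho>P = \<rho>\<close>, hence \<open>tr (M\<rho>) = tr (PMMP\<rho>)\<close>.\<close>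
lemma tr_projector_eq_state_inner:
  assumes \<rho>: "density_matrix D \<rho>" and M: "is_projector D M"
    and P: "P \<in> carrier_mat D D" "dagger P = P" and support: "P * \<rho> = \<rho>"
  shows "tr (M * \<rho>) = state_inner \<rho> (M * P) (M * P)"
proof -
  have R: "\<rho> \<in> carrier_mat D D" "dagger \<rho> = \<rho>" using \<rho> by (auto simp: density_matrix_def)
  have MC: "M \<in> carrier_mat D D" and hM: "dagger M = M" and pM: "M * M = M"
    using M by (auto simp: is_projector_def)
  have RP: "\<rho> * P = \<rho>"
    using dagger_mult[OF P(1) R(1)] support R(2) P(2) by simp
  have MP: "M * P \<in> carrier_mat D D" using MC P(1) by (rule mult_carrier_mat)
  have "dagger (M * P) * (M * P) = P * M * (M * P)"
    using dagger_mult[OF MC P(1)] hM P(2) by simp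
  also have "\<dots> = P * (M * (M * P))"
    by (rule assoc_mult_mat[OF P(1) MC MP])
  also have "M * (M * P) = M * P"
    using assoc_mult_mat[OF MC MC P(1)] pM by simp
  finally have "state_inner \<rho> (M * P) (M * P) = tr (P * (M * P) * \<rho>)"
    unfolding state_inner_def by simp
  also have "\<dots> = tr (P * ((M * P) * \<rho>))"
    using assoc_mult_mat[OF P(1) MP R(1)] by simp
  also have "\<dots> = tr (((M * P) * \<rho>) * P)"
    by (rule tr_mult_comm[OF P(1) mult_carrier_mat[OF MP R(1)]])
  also have "((M * P) * \<rho>) * P = (M * P) * (\<rho> * P)"
    by (rule assoc_mult_mat[OF MP R(1) P(1)])
  also have "\<dots> = M * (P * \<rho>)"
    using RP assoc_mult_mat[OF MC P(1) R(1)] by simp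
  finally show ?thesis using support by simp
qed

text \<open>Cauchy--Schwarz for \<open>state_inner \<rho>\<close>, applied to \<open>M P = \<Sum>\<^sub>k M A\<^sub>k\<close>.\<close>
lemma Re_tr_projector_le_blocks:
  assumes \<rho>: "density_matrix D \<rho>"
    and A: "\<And>k. k < N \<Longrightarrow> A k \<in> carrier_mat D D" and hA: "\<And>k. k < N \<Longrightarrow> dagger (A k) = A k"
    and support: "msum D D (map A [0..<N]) * \<rho> = \<rho>"
    and M: "is_projector D M"
  shows "Re (tr (M * \<rho>)) \<le> real N * (\<Sum>k<N. Re (tr (A k * M * A k * \<rho>)))"
proof -
  have MC: "M \<in> carrier_mat D D" and hM: "dagger M = M" and pM: "M * M = M"
    using M by (auto simp: is_projector_def)
  have P: "msum D D (map A [0..<N]) \<in> carrier_mat D D" by (rule msum_carrier) (auto intro: A)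
  have "dagger (msum D D (map A [0..<N])) = msum D D (map dagger (map A [0..<N]))"
    by (rule dagger_msum) (auto intro: A)
  also have "map dagger (map A [0..<N]) = map A [0..<N]"
    by (simp add: hA)
  finally have hP: "dagger (msum D D (map A [0..<N])) = msum D D (map A [0..<N])" .
  have MA: "M * A k \<in> carrier_mat D D" if "k < N" for k
    using MC A[OF that] by (rule mult_carrier_mat)
  have blocks: "M * msum D D (map A [0..<N]) = msum D D (map (\<lambda>k. M * A k) [0..<N])"
    by (subst msum_mult_left[OF MC]) (auto intro: A simp: comp_def)
  have compressed: "state_inner \<rho> (M * A k) (M * A k) = tr (A k * M * A k * \<rho>)" if "k < N" for k
  proof -
    have "dagger (M * A k) * (M * A k) = A k * M * (M * A k)"
      using dagger_mult[OF MC A[OF that]] hM hA[OF that] by simp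
    also have "\<dots> = A k * (M * M) * A k"
      using MC A[OF that] by (simp add: assoc_mult_mat[of _ D D _ D _ D])
    also have "\<dots> = A k * M * A k"
      using pM by simp
    finally show ?thesis unfolding state_inner_def by simp
  qed
  have "tr (M * \<rho>) = state_inner \<rho> (msum D D (map (\<lambda>k. M * A k) [0..<N])) (msum D D (map (\<lambda>k. M * A k) [0..<N]))"
    using tr_projector_eq_state_inner[OF \<rho> M P hP support] blocks by simp
  then have "Re (tr (M * \<rho>)) \<le> real N * (\<Sum>k<N. Re (state_inner \<rho> (M * A k) (M * A k)))"
    using state_inner_msum_self_le[OF MA \<rho>] by simp
  then show ?thesis by (simp add: compressed)
qed

lemma Re_sum_tr_projectors_le:
  fixes K M S :: "nat \<Rightarrow> complex mat" and s :: real
  assumes \<rho>: "density_matrix D \<rho>"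
    and K: "\<And>k. k < N \<Longrightarrow> K k \<in> carrier_mat D d"
    and support: "msum D D (map (\<lambda>k. K k * dagger (K k)) [0..<N]) * \<rho> = \<rho>"
    and M: "\<And>v. v < V \<Longrightarrow> is_projector D (M v)"
    and S: "\<And>v. v < V \<Longrightarrow> S v \<in> carrier_mat d d" and S_sum: "msum d d (map S [0..<V]) = 1\<^sub>m d"
    and compress: "\<And>k v. k < N \<Longrightarrow> v < V \<Longrightarrow> dagger (K k) * M v * K k = complex_of_real s \<cdot>\<^sub>m S v"
  shows "Re (\<Sum>v<V. tr (M v * \<rho>)) \<le> N * s"
proof -
  let ?A = "\<lambda>k. K k * dagger (K k)"
  have R: "\<rho> \<in> carrier_mat D D" and tr\<rho>: "tr \<rho> = 1" using \<rho> by (auto simp: density_matrix_def)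
  have A: "?A k \<in> carrier_mat D D" if "k < N" for k
    using K[OF that] by (meson dagger_carrier mult_carrier_mat)
  have dK\<rho>: "dagger (K k) * \<rho> \<in> carrier_mat d D" if "k < N" for k
    using dagger_carrier[OF K[OF that]] R by (rule mult_carrier_mat)
  have block: "tr (?A k * M v * ?A k * \<rho>) = s * tr (K k * S v * (dagger (K k) * \<rho>))"
    if k: "k < N" and v: "v < V" for k v
  proof -
    have MC: "M v \<in> carrier_mat D D" using M[OF v] by (simp add: is_projector_def)
    have Kk: "K k \<in> carrier_mat D d" and Kd: "dagger (K k) \<in> carrier_mat d D"
      using K[OF k] by simp_all
    have KdM: "dagger (K k) * M v \<in> carrier_mat d D" using Kd MC by (rule mult_carrier_mat)
    have "?A k * M v = K k * (dagger (K k) * M v)"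
      by (rule assoc_mult_mat[OF Kk Kd MC])
    then have "?A k * M v * ?A k = K k * (dagger (K k) * M v) * K k * dagger (K k)"
      using assoc_mult_mat[OF mult_carrier_mat[OF Kk KdM] Kk Kd] by simp
    also have "K k * (dagger (K k) * M v) * K k = K k * (dagger (K k) * M v * K k)"
      by (rule assoc_mult_mat[OF Kk KdM Kk])
    finally have "?A k * M v * ?A k * \<rho> = K k * (dagger (K k) * M v * K k) * dagger (K k) * \<rho>"
      by simp
    also have "\<dots> = K k * (dagger (K k) * M v * K k) * (dagger (K k) * \<rho>)"
      by (rule assoc_mult_mat[OF mult_carrier_mat[OF Kk mult_carrier_mat[OF KdM Kk]] Kd R])
    also have "\<dots> = complex_of_real s \<cdot>\<^sub>m (K k * S v * (dagger (K k) * \<rho>))"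
      using K[OF k] S[OF v] dK\<rho>[OF k]
      by (simp add: compress[OF k v] mult_smult_distrib mult_smult_assoc_mat[of _ D d])
    finally show ?thesis
      using mult_carrier_mat[OF mult_carrier_mat[OF K[OF k] S[OF v]] dK\<rho>[OF k]] by (simp add: tr_smult)
  qed
  have resolution: "(\<Sum>v<V. tr (K k * S v * (dagger (K k) * \<rho>))) = tr (?A k * \<rho>)" if k: "k < N" for k
  proof -
    have "(\<Sum>v<V. tr (K k * S v * (dagger (K k) * \<rho>))) = tr (K k * msum d d (map S [0..<V]) * (dagger (K k) * \<rho>))"
      using tr_mult_msum_mult[OF K[OF k] dK\<rho>[OF k], of "[0..<V]" S] S
      by (simp add: interv_sum_list_conv_sum_set_nat atLeast0LessThan)
    then show ?thesis
      using K[OF k] R assoc_mult_mat[OF K[OF k] dagger_carrier[OF K[OF k]] R] by (simp add: S_sum)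
  qed
  have total: "(\<Sum>k<N. tr (?A k * \<rho>)) = 1"
  proof -
    have "msum D D (map ?A [0..<N]) * \<rho> = msum D D (map (\<lambda>k. ?A k * \<rho>) [0..<N])"
      by (subst msum_mult_right[OF R]) (auto intro: A simp: comp_def)
    then have "tr \<rho> = tr (msum D D (map (\<lambda>k. ?A k * \<rho>) [0..<N]))"
      using support by simp
    also have "\<dots> = (\<Sum>k\<leftarrow>[0..<N]. tr (?A k * \<rho>))"
      by (subst tr_msum) (auto simp: comp_def intro: mult_carrier_mat[OF A R])
    finally show ?thesis using tr\<rho> by (simp add: interv_sum_list_conv_sum_set_nat atLeast0LessThan)
  qed
  have "Re (\<Sum>v<V. tr (M v * \<rho>)) \<le> (\<Sum>v<V. real N * (\<Sum>k<N. Re (tr (?A k * M v * ?A k * \<rho>))))"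
    unfolding Re_sum
    by (intro sum_mono Re_tr_projector_le_blocks[OF \<rho> A _ support M])
      (simp_all add: dagger_mult_self_dagger[OF K])
  also have "\<dots> = real N * s * Re (\<Sum>v<V. \<Sum>k<N. tr (K k * S v * (dagger (K k) * \<rho>)))"
    by (simp add: block Re_sum sum_distrib_left mult.assoc)
  also have "\<dots> = real N * s * Re (\<Sum>k<N. \<Sum>v<V. tr (K k * S v * (dagger (K k) * \<rho>)))"
    by (subst sum.swap) (rule refl)
  also have "\<dots> = real N * s"
    by (simp add: resolution total)
  finally show ?thesis .
qed

section \<open>Counting low-weight Pauli corrections\<close>

lemma hamming_weight_Cons[simp]:
  "hamming_weight (True # a) = Suc (hamming_weight a)" "hamming_weight (False # a) = hamming_weight a"
  by (simp_all add: hamming_weight_def)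

lemma length_filter_product:
  "length (filter (\<lambda>(a,b). P a \<and> Q b) (List.product xs ys)) = length (filter P xs) * length (filter Q ys)"
proof (induction xs)
  case (Cons x xs)
  have "length (filter (\<lambda>(a,b). P a \<and> Q b) (map (Pair x) ys)) = (if P x then length (filter Q ys) else 0)"
    by (induction ys) auto
  then show ?case using Cons by simp
qed simp

lemma length_filter_concat_pairs:
  "length (filter P (concat (map (\<lambda>x. [f x, g x]) xs))) =
    length (filter (\<lambda>x. P (f x)) xs) + length (filter (\<lambda>x. P (g x)) xs)"
  by (induction xs) auto

text \<open>The count \<open>c(m,t)\<close> satisfies \<open>c(m+1,t+1) = c(m,t) + c(m,t+1)\<close>, and
  \<open>(m+1)\<^sup>t + (m+1)\<^sup>t\<^sup>+\<^sup>1 \<le> (m+2)\<^sup>t\<^sup>+\<^sup>1\<close>.\<close>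
lemma length_filter_hamming_weight_le:
  "length (filter (\<lambda>a. hamming_weight a \<le> t) (bitstrings m)) \<le> (m+1)^t"
proof (induction m arbitrary: t)
  case 0
  then show ?case by (simp add: bitstrings_def)
next
  case (Suc m)
  have "bitstrings (Suc m) = concat (map (\<lambda>a. [True # a, False # a]) (bitstrings m))"
    by (simp add: bitstrings_def)
  then have split: "length (filter (\<lambda>a. hamming_weight a \<le> t) (bitstrings (Suc m))) =
      length (filter (\<lambda>a. Suc (hamming_weight a) \<le> t) (bitstrings m)) +
      length (filter (\<lambda>a. hamming_weight a \<le> t) (bitstrings m))"
    by (simp add: length_filter_concat_pairs)
  show ?case
  proof (cases t)
    case 0
    then show ?thesis using split Suc.IH[of 0] by simp
  next
    case (Suc t')
    have "length (filter (\<lambda>a. Suc (hamming_weight a) \<le> t) (bitstrings m)) \<le> (m+1)^t'"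
      using Suc.IH[of t'] Suc by simp
    moreover have "length (filter (\<lambda>a. hamming_weight a \<le> t) (bitstrings m)) \<le> (m+1)^t"
      by (rule Suc.IH)
    moreover have "(m+1)^t' + (m+1)^t \<le> (Suc m + 1)^t"
    proof -
      have "(m+1)^t' \<le> (m+2)^t'" by (rule power_mono) simp_all
      have "(m+1)^t' + (m+1)^t = (m+1)^t' * (m+2)" using Suc by simp
      also have "\<dots> \<le> (m+2)^t' * (m+2)" using \<open>(m+1)^t' \<le> (m+2)^t'\<close> by (rule mult_right_mono) simp
      also have "\<dots> = (Suc m + 1)^t" using Suc by simp
      finally show ?thesis .
    qed
    ultimately show ?thesis using split by simp
  qed
qed

definition low_weight_pairs :: "nat \<Rightarrow> nat \<Rightarrow> (bool list \<times> bool list) list" where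
  "low_weight_pairs m t = filter (\<lambda>(a,b). hamming_weight a \<le> t \<and> hamming_weight b \<le> t)
     (List.product (bitstrings m) (bitstrings m))"

lemma length_low_weight_pairs_le: "length (low_weight_pairs m t) \<le> (m+1)^(2*t)"
proof -
  have "length (low_weight_pairs m t) \<le> (m+1)^t * (m+1)^t"
    unfolding low_weight_pairs_def length_filter_product
    using length_filter_hamming_weight_le by (intro mult_mono) auto
  then show ?thesis by (simp add: power_add[symmetric] mult_2)
qed

lemma length_bitstrings_elem: "a \<in> set (bitstrings m) \<Longrightarrow> length a = m"
  by (simp add: bitstrings_def length_n_lists_elem)

lemma low_weight_pairs_length:
  "ab \<in> set (low_weight_pairs m t) \<Longrightarrow> length (fst ab) = m \<and> length (snd ab) = m"
  by (auto simp: low_weight_pairs_def mem_Times_iff length_bitstrings_elem)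

lemma kron_outer_one:
  assumes "\<psi> \<in> carrier_mat n 1"
  shows "kron (\<psi> * dagger \<psi>) (1\<^sub>m d) = kron \<psi> (1\<^sub>m d) * dagger (kron \<psi> (1\<^sub>m d))"
  using kron_mult[OF assms one_carrier_mat dagger_carrier[OF assms] one_carrier_mat]
  by (simp add: dagger_kron)

lemma kron_Pi_EPR_one:
  "kron (Pi_EPR m t) (1\<^sub>m d) = msum (2^m*2^m*d) (2^m*2^m*d)
     (map (\<lambda>(a,b). kron (epr_ket m a b) (1\<^sub>m d) * dagger (kron (epr_ket m a b) (1\<^sub>m d)))
       (low_weight_pairs m t))"
proof -
  have epr: "epr_ket m (fst ab) (snd ab) \<in> carrier_mat (2^m*2^m) 1" if "ab \<in> set (low_weight_pairs m t)" for ab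
    using low_weight_pairs_length[OF that] by (intro epr_ket_carrier) simp_all
  show ?thesis
    unfolding Pi_EPR_def low_weight_pairs_def[symmetric]
    by (subst kron_msum_left)
      (auto simp: case_prod_beta kron_outer_one[OF epr]
        intro!: mult_carrier_mat[OF epr dagger_carrier[OF epr]] arg_cong[where f = "msum _ _"])
qed

theorem mainTheorem12:
  fixes m t d :: nat and \<theta> :: "bool list" and \<rho> :: "complex mat"
    and Proj :: "nat \<Rightarrow> complex mat"
  assumes "length \<theta> = m"
    and "density_matrix (2^m * 2^m * d) \<rho>"
    and "kron (Pi_EPR m t) (1\<^sub>m d) * \<rho> = \<rho>"
    and "\<And>v. v < 2^m \<Longrightarrow> is_projector d (Proj v)"
    and "\<And>v w. v < 2^m \<Longrightarrow> w < 2^m \<Longrightarrow> v \<noteq> w \<Longrightarrow> Proj v * Proj w = 0\<^sub>m d d"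
    and "msum d d (map Proj [0..<2^m]) = 1\<^sub>m d"
  shows "Re (\<Sum>v<2^m. tr (kron (kron (Hpow \<theta> * ket m v * dagger (ket m v) * Hpow \<theta>) (1\<^sub>m (2^m)))
              (Proj v) * \<rho>)) \<le> (m + 1) ^ (2 * t) / 2 ^ m"
proof -
  define L where "L = low_weight_pairs m t"
  define K where "K k = kron (epr_ket m (fst (L!k)) (snd (L!k))) (1\<^sub>m d)" for k
  define Q where "Q v = Hpow \<theta> * ket m v * dagger (ket m v) * Hpow \<theta>" for v
  have lengths: "length (fst (L!k)) = m" "length (snd (L!k)) = m" if "k < length L" for k
    using low_weight_pairs_length[of "L!k" m t] nth_mem[OF that] unfolding L_def by simp_all
  have "Re (\<Sum>v<2^m. tr (kron (kron (Q v) (1\<^sub>m (2^m))) (Proj v) * \<rho>)) \<le> length L * (1 / 2^m)"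
  proof (rule Re_sum_tr_projectors_le[OF assms(2) _ _ _ _ assms(6)])
    show "K k \<in> carrier_mat (2^m * 2^m * d) d" if "k < length L" for k
      unfolding K_def using kron_carrier[OF epr_ket_carrier[OF lengths[OF that]] one_carrier_mat] by simp
    have "map (\<lambda>k. K k * dagger (K k)) [0..<length L] =
        map (\<lambda>(a,b). kron (epr_ket m a b) (1\<^sub>m d) * dagger (kron (epr_ket m a b) (1\<^sub>m d))) L"
      unfolding K_def by (rule nth_equalityI) (simp_all add: case_prod_beta)
    then show "msum (2^m * 2^m * d) (2^m * 2^m * d) (map (\<lambda>k. K k * dagger (K k)) [0..<length L]) * \<rho> = \<rho>"
      using assms(3) by (simp add: kron_Pi_EPR_one L_def)
    show projector: "is_projector (2^m * 2^m * d) (kron (kron (Q v) (1\<^sub>m (2^m))) (Proj v))" if "v < 2^m" for v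
      unfolding Q_def
      by (intro is_projector_kron is_projector_one assms(4)[OF that] Hpow_basis_projector(1)[OF assms(1) that])
    show "Proj v \<in> carrier_mat d d" if "v < 2^m" for v
      using assms(4)[OF that] by (simp add: is_projector_def)
    show "dagger (K k) * kron (kron (Q v) (1\<^sub>m (2^m))) (Proj v) * K k = complex_of_real (1 / 2^m) \<cdot>\<^sub>m Proj v"
      if "k < length L" "v < 2^m" for k v
      using epr_ket_sandwich[OF lengths[OF that(1)], of "Q v" "Proj v" d] assms(4)[OF that(2)]
        Hpow_basis_projector[OF assms(1) that(2)] projector[OF that(2)]
      by (simp add: K_def Q_def is_projector_def)
  qed
  also have "\<dots> \<le> (m + 1) ^ (2 * t) / 2 ^ m"
    using of_nat_mono[where 'a = real, OF length_low_weight_pairs_le[of m t]] unfolding L_def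
    by (simp add: divide_right_mono)
  finally show ?thesis unfolding Q_def .
qed

end
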